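(* Let $\Sigma$ be a complete smooth fan in $N_{\mathbb{R}}\cong\mathbb{R}^2$ with rays generated by primitive vectors $n_1,\dots,n_r\in N$ in anticlockwise order, maximal cones $\nu_j=\operatorname{cone}(n_j,n_{j+1})$ (indices mod $r$), self-intersection numbers $b_j$ and vectors $u_j\in M$ as in the context. (1) If $\vartheta$ is a semi-integral support function on $\Sigma$, then its kinks $(\ell_1,\dots,\ell_r)$ are integers forming a set of twisting numbers. (2) Conversely, every set of twisting numbers $(\ell_1,\dots,\ell_r)$ is the set of kinks of a semi-integral support function on $\Sigma$, which is unique up to adding an integral linear function (an element of $M$).
   Context: $M$ is the dual lattice of $N$. The self-intersection number $b_j$ of the toric curve corresponding to the ray $\mathbb{R}_{\ge0}n_j$ is defined by $n_{j-1}+n_{j+1}=-b_j n_j$. Let $u_j\in M$ be the unique primitive vector with $\langle u_j,n_j\rangle=0$ and $\langle u_j,n_{j+1}\rangle>0$. A semi-integral support function is a continuous function $\vartheta:N_{\mathbb{R}}\to\mathbb{R}$ which is linear on each maximal cone $\nu_j$ and satisfies $\vartheta(n_j)\in\tfrac12+\mathbb{Z}$ for all $j$. Writing $\vartheta_j\in M_{\mathbb{R}}$ for the linear function $\vartheta|_{\nu_j}$, the kink $\ell_j$ of $\vartheta$ at the ray $n_j$ is the real number with $\vartheta_j-\vartheta_{j-1}=\tfrac{\ell_j}{2}u_j$. A set of twisting numbers is an $r$-tuple of integers $(\ell_1,\dots,\ell_r)$ such that $\ell_j\equiv b_j \pmod 2$ for all $j$ and $\sum_{j=1}^r\ell_j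 u_j=0$. *)

theory Defs
  imports "HOL-Analysis.Analysis"
begin

text \<open>Conventions. N = M = int \<times> int with the standard pairing; N_R = M_R = real \<times> real.
  The rays are indexed by j \<in> {0..<r} (the paper uses 1..r); indices are taken mod r.\<close>

definition nxt :: "nat \<Rightarrow> nat \<Rightarrow> nat" where "nxt r j = (j + 1) mod r"
definition prv :: "nat \<Rightarrow> nat \<Rightarrow> nat" where "prv r j = (j + r - 1) mod r"

definition ipair :: "int \<times> int \<Rightarrow> int \<times> int \<Rightarrow> int" where
  "ipair u v = fst u * fst v + snd u * snd v"

definition rpair :: "real \<times> real \<Rightarrow> real \<times> real \<Rightarrow> real" where
  "rpair u v = fst u * fst v + snd u * snd v"

definition rvec :: "int \<times> int \<Rightarrow> real \<times> real" where
  "rvec v = (real_of_int (fst v), real_of_int (snd v))"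

definition det2 :: "int \<times> int \<Rightarrow> int \<times> int \<Rightarrow> int" where
  "det2 v w = fst v * snd w - snd v * fst w"

definition primitive :: "int \<times> int \<Rightarrow> bool" where
  "primitive v \<longleftrightarrow> gcd (fst v) (snd v) = 1"

definition maxcone :: "nat \<Rightarrow> (nat \<Rightarrow> int \<times> int) \<Rightarrow> nat \<Rightarrow> (real \<times> real) set" where
  "maxcone r n j = {a *\<^sub>R rvec (n j) + c *\<^sub>R rvec (n (nxt r j)) | a c. 0 \<le> a \<and> 0 \<le> c}"

text \<open>Complete smooth fan in R^2 with rays generated by primitive n_0,...,n_{r-1} in
  anticlockwise order and maximal cones cone(n_j,n_{j+1}): consecutive rays form a
  positively oriented lattice basis (smoothness + anticlockwise order), the maximal cones
  cover the plane and meet only along common faces (pairwise disjoint interiors).\<close>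
definition smooth_complete_fan :: "nat \<Rightarrow> (nat \<Rightarrow> int \<times> int) \<Rightarrow> bool" where
  "smooth_complete_fan r n \<longleftrightarrow>
     3 \<le> r \<and>
     (\<forall>j<r. primitive (n j)) \<and>
     inj_on n {0..<r} \<and>
     (\<forall>j<r. det2 (n j) (n (nxt r j)) = 1) \<and>
     (\<Union>j\<in>{0..<r}. maxcone r n j) = UNIV \<and>
     (\<forall>j<r. \<forall>k<r. j \<noteq> k \<longrightarrow> interior (maxcone r n j) \<inter> interior (maxcone r n k) = {})"

definition selfint :: "nat \<Rightarrow> (nat \<Rightarrow> int \<times> int) \<Rightarrow> nat \<Rightarrow> int" where
  "selfint r n j = (THE b. fst (n (prv r j)) + fst (n (nxt r j)) = - b * fst (n j) \<and>
                          snd (n (prv r j)) + snd (n (nxt r j)) = - b * snd (n j))"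

definition uvec :: "nat \<Rightarrow> (nat \<Rightarrow> int \<times> int) \<Rightarrow> nat \<Rightarrow> int \<times> int" where
  "uvec r n j = (THE u. primitive u \<and> ipair u (n j) = 0 \<and> ipair u (n (nxt r j)) > 0)"

definition semi_integral_support_function ::
    "nat \<Rightarrow> (nat \<Rightarrow> int \<times> int) \<Rightarrow> (real \<times> real \<Rightarrow> real) \<Rightarrow> bool" where
  "semi_integral_support_function r n \<theta> \<longleftrightarrow>
     continuous_on UNIV \<theta> \<and>
     (\<forall>j<r. \<exists>m. \<forall>x\<in>maxcone r n j. \<theta> x = rpair m x) \<and>
     (\<forall>j<r. \<exists>k::int. \<theta> (rvec (n j)) = real_of_int k + 1/2)"

definition theta_lin :: "nat \<Rightarrow> (nat \<Rightarrow> int \<times> int) \<Rightarrow> (real \<times> real \<Rightarrow> real) \<Rightarrow> nat \<Rightarrow> real \<times> real" where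
  "theta_lin r n \<theta> j = (THE m. \<forall>x\<in>maxcone r n j. \<theta> x = rpair m x)"

definition kink :: "nat \<Rightarrow> (nat \<Rightarrow> int \<times> int) \<Rightarrow> (real \<times> real \<Rightarrow> real) \<Rightarrow> nat \<Rightarrow> real" where
  "kink r n \<theta> j = (THE l. theta_lin r n \<theta> j - theta_lin r n \<theta> (prv r j) = (l / 2) *\<^sub>R rvec (uvec r n j))"

definition twisting_numbers :: "nat \<Rightarrow> (nat \<Rightarrow> int \<times> int) \<Rightarrow> (nat \<Rightarrow> int) \<Rightarrow> bool" where
  "twisting_numbers r n l \<longleftrightarrow>
     (\<forall>j<r. l j mod 2 = selfint r n j mod 2) \<and>
     (\<Sum>j<r. l j * fst (uvec r n j)) = 0 \<and>
     (\<Sum>j<r. l j * snd (uvec r n j)) = 0"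

end

theory Submission
  imports Defs
begin

text \<open>
  Let \<open>\<theta>\<^sub>j\<close> be the linear function of \<open>\<theta>\<close> on \<open>\<nu>\<^sub>j\<close>. Since \<open>\<theta>\<^sub>j\<close> and \<open>\<theta>\<^sub>j\<^sub>-\<^sub>1\<close> agree on \<open>n\<^sub>j\<close>,
  their difference is a multiple of \<open>u\<^sub>j\<close>, and pairing it with \<open>n\<^sub>j\<^sub>+\<^sub>1 = -b\<^sub>j n\<^sub>j - n\<^sub>j\<^sub>-\<^sub>1\<close> gives
  \<open>\<ell>\<^sub>j = 2(\<theta>(n\<^sub>j\<^sub>+\<^sub>1) + b\<^sub>j \<theta>(n\<^sub>j) + \<theta>(n\<^sub>j\<^sub>-\<^sub>1))\<close>. For half-integral values this is an integer
  of the parity of \<open>b\<^sub>j\<close>, and \<open>\<Sum> \<ell>\<^sub>j u\<^sub>j = 2 \<Sum> (\<theta>\<^sub>j - \<theta>\<^sub>j\<^sub>-\<^sub>1) = 0\<close> telescopes.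

  Conversely, start with the linear function equal to \<open>1/2\<close> on \<open>n\<^sub>0\<close> and \<open>n\<^sub>1\<close> and add
  \<open>(\<ell>\<^sub>j/2) u\<^sub>j\<close> when crossing each ray; \<open>\<Sum> \<ell>\<^sub>j u\<^sub>j = 0\<close> closes the cycle. The same recurrence,
  read backwards, propagates half-integrality thanks to the parity condition. Distinct maximal
  cones meet only along a common ray, on which adjacent pieces agree, so the pieces glue to a
  continuous function. Two support functions with the same kinks differ by a single linear
  function; it is integral on the lattice basis \<open>n\<^sub>0, n\<^sub>1\<close>, hence lies in \<open>M\<close>.
\<close>

section \<open>Planar lattice algebra\<close>

lemma rpair_eq_inner: "rpair = inner"
  by (simp add: fun_eq_iff rpair_def inner_prod_def)

definition rdet :: "real \<times> real \<Rightarrow> real \<times> real \<Rightarrow> real" where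
  "rdet p q = fst p * snd q - snd p * fst q"

definition rot :: "real \<times> real \<Rightarrow> real \<times> real" where
  "rot p = (- snd p, fst p)"

lemma inner_rot_left: "rot p \<bullet> q = rdet p q"
  by (simp add: rot_def rdet_def inner_prod_def)

lemma rdet_rvec: "rdet (rvec v) (rvec w) = of_int (det2 v w)"
  by (simp add: rdet_def rvec_def det2_def)

lemma rvec_eq_zero_iff: "rvec v = 0 \<longleftrightarrow> v = 0"
  by (simp add: rvec_def prod_eq_iff zero_prod_def)

lemma unimodular_decomp:
  fixes a b c d x y :: "'a::comm_ring_1"
  assumes "a*d - b*c = 1"
  shows "x = (x*d - y*c)*a + (a*y - b*x)*c" and "y = (x*d - y*c)*b + (a*y - b*x)*d"
proof -
  have "(x*d - y*c)*a + (a*y - b*x)*c = x*(a*d - b*c)"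
    and "(x*d - y*c)*b + (a*y - b*x)*d = y*(a*d - b*c)"
    by (simp_all add: algebra_simps)
  then show "x = (x*d - y*c)*a + (a*y - b*x)*c" and "y = (x*d - y*c)*b + (a*y - b*x)*d"
    using assms by simp_all
qed

lemma unimodular_annihilator:
  fixes a b c d s t :: "'a::comm_ring_1"
  assumes "a*d - b*c = 1" and "s*a + t*b = 0"
  shows "s = - ((s*c + t*d) * b)" and "t = (s*c + t*d) * a"
proof -
  have "s = s*(a*d - b*c)" using assms(1) by simp
  also have "\<dots> = (s*a + t*b)*d - (s*c + t*d)*b" by (simp add: algebra_simps)
  finally show "s = - ((s*c + t*d) * b)" using assms(2) by simp
  have "t = t*(a*d - b*c)" using assms(1) by simp
  also have "\<dots> = (s*c + t*d)*a - (s*a + t*b)*c" by (simp add: algebra_simps)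
  finally show "t = (s*c + t*d) * a" using assms(2) by simp
qed

lemma rdet_decomp: "rdet p q = 1 \<Longrightarrow> x = rdet x q *\<^sub>R p + rdet p x *\<^sub>R q"
  unfolding rdet_def
  by (cases x; cases p; cases q) (simp add: prod_eq_iff, metis unimodular_decomp)

lemma rdet_combination_left: "rdet p q = 1 \<Longrightarrow> rdet (a *\<^sub>R p + c *\<^sub>R q) q = a"
  and rdet_combination_right: "rdet p q = 1 \<Longrightarrow> rdet p (a *\<^sub>R p + c *\<^sub>R q) = c"
  by (simp_all add: rdet_def algebra_simps)

lemma annihilator_eq_rot:
  assumes "rdet p q = 1" and "D \<bullet> p = 0"
  shows "D = (D \<bullet> q) *\<^sub>R rot p"
  using assms unimodular_annihilator[where a="fst p" and b="snd p" and c="fst q" and d="snd q"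
      and s="fst D" and t="snd D"]
  by (simp add: rdet_def rot_def inner_prod_def prod_eq_iff)

lemma inner_eq_on_unimodular_basis:
  assumes "rdet p q = 1" and "m \<bullet> p = m' \<bullet> p" and "m \<bullet> q = m' \<bullet> q"
  shows "m = m'"
  using annihilator_eq_rot[OF assms(1), of "m - m'"] assms(2,3) by (simp add: inner_diff_left)

lemma primitive_eqI_positive_multiple:
  assumes "primitive v" and "primitive w" and "t > 0" and "rvec v = t *\<^sub>R rvec w"
  shows "v = w"
proof -
  obtain a b where ab: "a * fst w + b * snd w = 1"
    using bezout_int[of "fst w" "snd w"] assms(2) by (auto simp: primitive_def)
  have comp: "of_int (fst v) = t * of_int (fst w)" "of_int (snd v) = t * of_int (snd w)"
    using assms(4) by (simp_all add: rvec_def prod_eq_iff)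
  define k where "k = a * fst v + b * snd v"
  have "of_int k = t * of_int (a * fst w + b * snd w)"
    by (simp add: k_def comp algebra_simps)
  then have t: "t = of_int k" using ab by simp
  then have v: "v = (k * fst w, k * snd w)"
    using comp by (simp add: prod_eq_iff flip: of_int_mult)
  have "\<bar>k\<bar> = 1"
    using assms(1,2) gcd_mult_distrib_int[of k "fst w" "snd w"] by (simp add: primitive_def v)
  moreover have "k > 0" using assms(3) t by simp
  ultimately show ?thesis by (simp add: v)
qed

lemma integral_functional_on_unimodular_basis:
  assumes "det2 p q = 1" and "D \<bullet> rvec p = of_int a" and "D \<bullet> rvec q = of_int b"
  shows "D = rvec (a * snd q - b * snd p, b * fst p - a * fst q)"
proof (rule inner_eq_on_unimodular_basis)
  show "rdet (rvec p) (rvec q) = 1" using assms(1) by (simp add: rdet_rvec)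
  show "D \<bullet> rvec p = rvec (a * snd q - b * snd p, b * fst p - a * fst q) \<bullet> rvec p"
    and "D \<bullet> rvec q = rvec (a * snd q - b * snd p, b * fst p - a * fst q) \<bullet> rvec q"
    using assms unfolding det2_def
    by (auto simp: rvec_def inner_prod_def algebra_simps simp flip: of_int_mult of_int_diff)
qed

lemma sum_scaleR_rvec:
  "(\<Sum>j\<in>A. of_int (l j) *\<^sub>R rvec (u j)) = rvec (\<Sum>j\<in>A. l j * fst (u j), \<Sum>j\<in>A. l j * snd (u j))"
  by (simp add: rvec_def prod_eq_iff fst_sum snd_sum)

section \<open>Half-integers\<close>

definition half_integral :: "real \<Rightarrow> bool" where
  "half_integral x \<longleftrightarrow> (\<exists>k::int. x = of_int k + 1/2)"

lemma half_integral_diff: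
  assumes "half_integral x" and "half_integral y"
  shows "\<exists>k::int. x - y = of_int k"
proof -
  obtain i j :: int where "x = of_int i + 1/2" "y = of_int j + 1/2"
    using assms by (auto simp: half_integral_def)
  then show ?thesis by (intro exI[of _ "i - j"]) simp
qed

lemma twice_half_integral_combination:
  assumes "half_integral x" and "half_integral y" and "half_integral z"
  shows "\<exists>l::int. 2 * (x + of_int b * y + z) = of_int l \<and> l mod 2 = b mod 2"
proof -
  obtain i j k :: int where "x = of_int i + 1/2" "y = of_int j + 1/2" "z = of_int k + 1/2"
    using assms by (auto simp: half_integral_def)
  then have "2 * (x + of_int b * y + z) = of_int (2 * (i + b * j + k + 1) + b)"
    by (simp add: algebra_simps)
  moreover have "(2 * (i + b * j + k + 1) + b) mod 2 = b mod 2" by presburger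
  ultimately show ?thesis by blast
qed

lemma half_integral_recurrence:
  assumes "half_integral x" and "half_integral y" and "l mod 2 = b mod 2"
  shows "half_integral (of_int l / 2 - of_int b * y - x)"
proof -
  obtain i j :: int where "x = of_int i + 1/2" "y = of_int j + 1/2"
    using assms(1,2) by (auto simp: half_integral_def)
  moreover have "2 dvd l - b" using assms(3) by (simp add: mod_eq_dvd_iff)
  then obtain c where "l = b + 2 * c" by (auto simp: dvd_def algebra_simps)
  ultimately have "of_int l / 2 - of_int b * y - x = of_int (c - b * j - i - 1) + 1/2"
    by (simp add: algebra_simps)
  then show ?thesis unfolding half_integral_def by blast
qed

section \<open>Cones of a complete smooth fan\<close>

locale smooth_fan =
  fixes r :: nat and n :: "nat \<Rightarrow> int \<times> int"
  assumes fan: "smooth_complete_fan r n"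
begin

abbreviation ray :: "nat \<Rightarrow> real \<times> real" where "ray j \<equiv> rvec (n j)"

lemma three_le_r: "3 \<le> r"
  using fan by (simp add: smooth_complete_fan_def)

lemma nxt_eq: "j < r \<Longrightarrow> nxt r j = (if j + 1 = r then 0 else j + 1)"
  by (simp add: nxt_def)

lemma prv_eq: "j < r \<Longrightarrow> prv r j = (if j = 0 then r - 1 else j - 1)"
  using three_le_r by (auto simp: prv_def mod_if)

lemma nxt_less: "j < r \<Longrightarrow> nxt r j < r"
  and prv_less: "j < r \<Longrightarrow> prv r j < r"
  and nxt_prv: "j < r \<Longrightarrow> nxt r (prv r j) = j"
  and prv_nxt: "j < r \<Longrightarrow> prv r (nxt r j) = j"
  using three_le_r by (auto simp: nxt_eq prv_eq)

lemma det2_nxt: "j < r \<Longrightarrow> det2 (n j) (n (nxt r j)) = 1"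
  using fan by (simp add: smooth_complete_fan_def)

lemma rdet_ray_nxt: "j < r \<Longrightarrow> rdet (ray j) (ray (nxt r j)) = 1"
  by (simp add: rdet_rvec det2_nxt)

lemma ray_nonzero: "j < r \<Longrightarrow> ray j \<noteq> 0"
  using rdet_ray_nxt[of j] by (auto simp: rdet_def)

lemma primitive_ray: "j < r \<Longrightarrow> primitive (n j)"
  using fan by (simp add: smooth_complete_fan_def)

lemma uvec_eq: "j < r \<Longrightarrow> uvec r n j = (- snd (n j), fst (n j))"
  unfolding uvec_def
proof (rule the_equality)
  assume j: "j < r"
  note det = det2_nxt[OF j, unfolded det2_def]
  show "primitive (- snd (n j), fst (n j)) \<and> ipair (- snd (n j), fst (n j)) (n j) = 0 \<and>
        0 < ipair (- snd (n j), fst (n j)) (n (nxt r j))"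
  proof (intro conjI)
    show "primitive (- snd (n j), fst (n j))"
      using primitive_ray[OF j] by (simp add: primitive_def gcd.commute)
    show "ipair (- snd (n j), fst (n j)) (n j) = 0"
      by (simp add: ipair_def)
    show "0 < ipair (- snd (n j), fst (n j)) (n (nxt r j))"
      using det by (simp add: ipair_def algebra_simps)
  qed
  fix u assume u: "primitive u \<and> ipair u (n j) = 0 \<and> 0 < ipair u (n (nxt r j))"
  define k where "k = ipair u (n (nxt r j))"
  have "fst u * fst (n j) + snd u * snd (n j) = 0" using u by (simp add: ipair_def)
  from unimodular_annihilator[OF det this]
  have u_eq: "u = (k * - snd (n j), k * fst (n j))"
    by (simp add: k_def ipair_def prod_eq_iff)
  have "\<bar>k\<bar> = 1"
    using u primitive_ray[OF j] gcd_mult_distrib_int[of k "snd (n j)" "fst (n j)"]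
    by (simp add: u_eq primitive_def gcd.commute)
  moreover have "k > 0" using u by (simp add: k_def)
  ultimately show "u = (- snd (n j), fst (n j))" by (simp add: u_eq)
qed

lemma rvec_uvec: "j < r \<Longrightarrow> rvec (uvec r n j) = rot (ray j)"
  by (simp add: uvec_eq rvec_def rot_def)

lemma ray_nxt_selfint:
  assumes j: "j < r"
  shows "ray (nxt r j) = - of_int (selfint r n j) *\<^sub>R ray j - ray (prv r j)"
proof -
  define p q w where "p = n (prv r j)" and "q = n j" and "w = n (nxt r j)"
  have dp: "fst p * snd q - snd p * fst q = 1"
    using det2_nxt[OF prv_less[OF j]] by (simp add: p_def q_def nxt_prv[OF j] det2_def)
  have dq: "fst q * snd w - snd q * fst w = 1"
    using det2_nxt[OF j] by (simp add: q_def w_def det2_def)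
  define c where "c = fst p * snd w - snd p * fst w"
  define x y where "x = fst p + fst w" and "y = snd p + snd w"
  have coeff1: "x * snd q - y * fst q = 0"
    using dp dq by (simp add: x_def y_def algebra_simps)
  have coeff2: "fst p * y - snd p * x = c"
    by (simp add: x_def y_def c_def algebra_simps)
  have "x = c * fst q \<and> y = c * snd q"
    using unimodular_decomp[OF dp, where x=x and y=y] unfolding coeff1 coeff2 by simp
  then have sum: "fst p + fst w = - (- c) * fst q \<and> snd p + snd w = - (- c) * snd q"
    by (simp add: x_def y_def)
  have "selfint r n j = - c"
    unfolding selfint_def p_def[symmetric] q_def[symmetric] w_def[symmetric]
  proof (rule the_equality)
    fix b assume "fst p + fst w = - b * fst q \<and> snd p + snd w = - b * snd q"
    then have "b * fst q = (- c) * fst q" "b * snd q = (- c) * snd q" using sum by simp_all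
    moreover have "fst q \<noteq> 0 \<or> snd q \<noteq> 0" using dq by auto
    ultimately show "b = - c" using mult_right_cancel by blast
  qed (rule sum)
  then show ?thesis
    using sum by (simp add: p_def q_def w_def rvec_def prod_eq_iff algebra_simps flip: of_int_mult of_int_add)
qed

lemma maxcone_eq:
  assumes j: "j < r"
  shows "maxcone r n j = {x. 0 \<le> rdet x (ray (nxt r j)) \<and> 0 \<le> rdet (ray j) x}"
proof -
  note basis = rdet_ray_nxt[OF j]
  have "x \<in> maxcone r n j" if "0 \<le> rdet x (ray (nxt r j))" "0 \<le> rdet (ray j) x" for x
    using that rdet_decomp[OF basis, of x] unfolding maxcone_def by blast
  then show ?thesis
    by (auto simp: maxcone_def rdet_combination_left[OF basis] rdet_combination_right[OF basis])
qed

lemma maxcone_eq_halfspaces: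
  "j < r \<Longrightarrow> maxcone r n j = {x. rot (ray (nxt r j)) \<bullet> x \<le> 0} \<inter> {x. rot (ray j) \<bullet> x \<ge> 0}"
  by (auto simp: maxcone_eq inner_rot_left rdet_def algebra_simps)

lemma ray_in_maxcone: "ray j \<in> maxcone r n j"
  unfolding maxcone_def by (rule CollectI, rule exI[of _ 1], rule exI[of _ 0]) simp

lemma ray_nxt_in_maxcone: "ray (nxt r j) \<in> maxcone r n j"
  unfolding maxcone_def by (rule CollectI, rule exI[of _ 0], rule exI[of _ 1]) simp

lemma ray_in_maxcone_prv: "j < r \<Longrightarrow> ray j \<in> maxcone r n (prv r j)"
  using ray_nxt_in_maxcone[of "prv r j"] nxt_prv by metis

lemma closed_maxcone: "j < r \<Longrightarrow> closed (maxcone r n j)"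
  by (simp add: maxcone_eq_halfspaces closed_Int closed_halfspace_le closed_halfspace_ge)

lemma maxcone_cover: "\<exists>j<r. x \<in> maxcone r n j"
  using fan unfolding smooth_complete_fan_def by (metis UNIV_I UN_E atLeastLessThan_iff)

lemma open_subset_interior_maxcone:
  assumes j: "j < r"
  shows "open {x. 0 < rdet x (ray (nxt r j)) \<and> 0 < rdet (ray j) x}"
    and "{x. 0 < rdet x (ray (nxt r j)) \<and> 0 < rdet (ray j) x} \<subseteq> interior (maxcone r n j)"
proof -
  have "{x. 0 < rdet x (ray (nxt r j)) \<and> 0 < rdet (ray j) x} =
        {x. rot (ray (nxt r j)) \<bullet> x < 0} \<inter> {x. rot (ray j) \<bullet> x > 0}"
    by (auto simp: inner_rot_left rdet_def algebra_simps)
  then show o: "open {x. 0 < rdet x (ray (nxt r j)) \<and> 0 < rdet (ray j) x}"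
    by (simp add: open_Int open_halfspace_lt open_halfspace_gt)
  show "{x. 0 < rdet x (ray (nxt r j)) \<and> 0 < rdet (ray j) x} \<subseteq> interior (maxcone r n j)"
    by (rule interior_maximal[OF _ o]) (auto simp: maxcone_eq[OF j])
qed

lemma maxcone_subset_closure_interior:
  assumes j: "j < r"
  shows "maxcone r n j \<subseteq> closure (interior (maxcone r n j))"
proof -
  have "rdet (ray j + ray (nxt r j)) (ray (nxt r j)) = 1" "rdet (ray j) (ray j + ray (nxt r j)) = 1"
    using rdet_combination_left[OF rdet_ray_nxt[OF j], of 1 1]
      rdet_combination_right[OF rdet_ray_nxt[OF j], of 1 1] by simp_all
  then have "ray j + ray (nxt r j) \<in> interior (maxcone r n j)"
    using open_subset_interior_maxcone(2)[OF j] by auto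
  then have "interior (maxcone r n j) \<noteq> {}" by blast
  moreover have "convex (maxcone r n j)"
    by (simp add: maxcone_eq_halfspaces[OF j] convex_Int convex_halfspace_le convex_halfspace_ge)
  ultimately show ?thesis
    using convex_closure_interior closure_subset closed_maxcone[OF j] closure_closed by metis
qed

lemma maxcone_inter_on_boundary:
  assumes j: "j < r" and k: "k < r" and "j \<noteq> k"
    and xj: "x \<in> maxcone r n j" and xk: "x \<in> maxcone r n k"
  shows "rdet x (ray (nxt r j)) = 0 \<or> rdet (ray j) x = 0"
proof (rule ccontr)
  let ?S = "{x. 0 < rdet x (ray (nxt r j)) \<and> 0 < rdet (ray j) x}"
  assume "\<not> ?thesis"
  with xj have "x \<in> ?S \<inter> closure (interior (maxcone r n k))"
    using maxcone_subset_closure_interior[OF k] xk by (auto simp: maxcone_eq[OF j])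
  then have "?S \<inter> interior (maxcone r n k) \<noteq> {}"
    using open_Int_closure_eq_empty[OF open_subset_interior_maxcone(1)[OF j]] by blast
  then have "interior (maxcone r n j) \<inter> interior (maxcone r n k) \<noteq> {}"
    using open_subset_interior_maxcone(2)[OF j] by blast
  with fan j k \<open>j \<noteq> k\<close> show False
    unfolding smooth_complete_fan_def by blast
qed

lemma maxcone_inter_subset_rays:
  assumes "j < r" and "k < r" and "j \<noteq> k"
    and "x \<in> maxcone r n j" and "x \<in> maxcone r n k"
  obtains a p where "a \<ge> 0" and "p = j \<or> p = nxt r j" and "x = a *\<^sub>R ray p"
proof -
  have dec: "x = rdet x (ray (nxt r j)) *\<^sub>R ray j + rdet (ray j) x *\<^sub>R ray (nxt r j)"
    by (rule rdet_decomp[OF rdet_ray_nxt[OF assms(1)]])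
  have "0 \<le> rdet x (ray (nxt r j))" "0 \<le> rdet (ray j) x"
    using assms(4) by (auto simp: maxcone_eq[OF assms(1)])
  with maxcone_inter_on_boundary[OF assms] dec that show ?thesis
    by (metis add.left_neutral add.right_neutral scale_zero_left)
qed

section \<open>Kinks of semi-integral support functions\<close>

lemma theta_lin_eqI:
  assumes j: "j < r" and lin: "\<forall>x\<in>maxcone r n j. \<theta> x = m \<bullet> x"
  shows "theta_lin r n \<theta> j = m"
  unfolding theta_lin_def rpair_eq_inner
proof (rule the_equality)
  fix m' assume "\<forall>x\<in>maxcone r n j. \<theta> x = m' \<bullet> x"
  with lin show "m' = m"
    using inner_eq_on_unimodular_basis[OF rdet_ray_nxt[OF j]] ray_in_maxcone ray_nxt_in_maxcone
    by metis
qed (rule lin)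

lemma support_function_on_maxcone:
  assumes "semi_integral_support_function r n \<theta>" and j: "j < r" and "x \<in> maxcone r n j"
  shows "\<theta> x = theta_lin r n \<theta> j \<bullet> x"
proof -
  obtain m where "\<forall>x\<in>maxcone r n j. \<theta> x = m \<bullet> x"
    using assms(1) j unfolding semi_integral_support_function_def rpair_eq_inner by blast
  with theta_lin_eqI[OF j this] assms(3) show ?thesis by simp
qed

lemma support_function_half_integral:
  "semi_integral_support_function r n \<theta> \<Longrightarrow> j < r \<Longrightarrow> half_integral (\<theta> (ray j))"
  unfolding semi_integral_support_function_def half_integral_def by blast

lemma kink_eqI:
  assumes j: "j < r"
    and "theta_lin r n \<theta> j - theta_lin r n \<theta> (prv r j) = (l / 2) *\<^sub>R rvec (uvec r n j)"
  shows "kink r n \<theta> j = l"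
  unfolding kink_def
proof (rule the_equality)
  fix l' assume "theta_lin r n \<theta> j - theta_lin r n \<theta> (prv r j) = (l' / 2) *\<^sub>R rvec (uvec r n j)"
  with assms(2) have "(l' / 2) *\<^sub>R rot (ray j) = (l / 2) *\<^sub>R rot (ray j)"
    by (simp add: rvec_uvec[OF j])
  moreover have "rot (ray j) \<noteq> 0"
    using ray_nonzero[OF j] by (auto simp: rot_def prod_eq_iff)
  ultimately show "l' = l" by simp
qed (rule assms(2))

lemma theta_lin_diff_eq_kink:
  assumes s: "semi_integral_support_function r n \<theta>" and j: "j < r"
  shows "theta_lin r n \<theta> j - theta_lin r n \<theta> (prv r j) = (kink r n \<theta> j / 2) *\<^sub>R rvec (uvec r n j)"
proof -
  define D where "D = theta_lin r n \<theta> j - theta_lin r n \<theta> (prv r j)"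
  have "D \<bullet> ray j = 0"
    using support_function_on_maxcone[OF s j ray_in_maxcone]
      support_function_on_maxcone[OF s prv_less[OF j] ray_in_maxcone_prv[OF j]]
    by (simp add: D_def inner_diff_left)
  then have "D = ((2 * (D \<bullet> ray (nxt r j))) / 2) *\<^sub>R rvec (uvec r n j)"
    using annihilator_eq_rot[OF rdet_ray_nxt[OF j]] by (simp add: rvec_uvec[OF j])
  then show ?thesis
    using kink_eqI[OF j] by (metis D_def)
qed

lemma inner_diff_ray_nxt:
  assumes j: "j < r" and agree: "m' \<bullet> ray j = m \<bullet> ray j"
  shows "(m - m') \<bullet> ray (nxt r j) =
         m \<bullet> ray (nxt r j) + of_int (selfint r n j) * (m \<bullet> ray j) + m' \<bullet> ray (prv r j)"
proof -
  have "m' \<bullet> ray (nxt r j) = - of_int (selfint r n j) * (m \<bullet> ray j) - m' \<bullet> ray (prv r j)"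
    by (subst ray_nxt_selfint[OF j]) (simp add: inner_diff_right agree)
  then show ?thesis by (simp add: inner_diff_left)
qed

lemma kink_eq_values_on_rays:
  assumes s: "semi_integral_support_function r n \<theta>" and j: "j < r"
  shows "kink r n \<theta> j = 2 * (\<theta> (ray (nxt r j)) + of_int (selfint r n j) * \<theta> (ray j) + \<theta> (ray (prv r j)))"
proof -
  let ?m = "theta_lin r n \<theta> j" and ?m' = "theta_lin r n \<theta> (prv r j)"
  have on_j: "\<theta> (ray j) = ?m \<bullet> ray j" "\<theta> (ray (nxt r j)) = ?m \<bullet> ray (nxt r j)"
    using support_function_on_maxcone[OF s j] ray_in_maxcone ray_nxt_in_maxcone by auto
  have on_prv: "\<theta> (ray j) = ?m' \<bullet> ray j" "\<theta> (ray (prv r j)) = ?m' \<bullet> ray (prv r j)"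
    using support_function_on_maxcone[OF s prv_less[OF j]] ray_in_maxcone_prv[OF j] ray_in_maxcone
    by auto
  have "(?m - ?m') \<bullet> ray (nxt r j) = kink r n \<theta> j / 2"
    using rdet_ray_nxt[OF j]
    by (simp add: theta_lin_diff_eq_kink[OF s j] rvec_uvec[OF j] inner_rot_left)
  with inner_diff_ray_nxt[OF j] on_j on_prv show ?thesis by simp
qed

lemma sum_diff_prv_eq_0: "(\<Sum>j<r. f j - f (prv r j)) = (0 :: 'a::ab_group_add)"
proof -
  have "bij_betw (prv r) {..<r} {..<r}"
    by (rule bij_betw_byWitness[where f'="nxt r"]) (auto simp: prv_less nxt_less nxt_prv prv_nxt)
  then show ?thesis
    by (simp add: sum_subtractf sum.reindex_bij_betw)
qed

lemma kinks_are_twisting_numbers: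
  assumes s: "semi_integral_support_function r n \<theta>"
  shows "\<exists>l. (\<forall>j<r. kink r n \<theta> j = of_int (l j)) \<and> twisting_numbers r n l"
proof -
  have "\<forall>j. \<exists>l. j < r \<longrightarrow> kink r n \<theta> j = of_int l \<and> l mod 2 = selfint r n j mod 2"
    using twice_half_integral_combination support_function_half_integral[OF s]
      kink_eq_values_on_rays[OF s] nxt_less prv_less by metis
  then obtain l where l: "\<And>j. j < r \<Longrightarrow> kink r n \<theta> j = of_int (l j) \<and> l j mod 2 = selfint r n j mod 2"
    by metis
  have "(\<Sum>j<r. of_int (l j) *\<^sub>R rvec (uvec r n j)) = 2 *\<^sub>R (\<Sum>j<r. theta_lin r n \<theta> j - theta_lin r n \<theta> (prv r j))"
    by (simp add: scaleR_sum_right theta_lin_diff_eq_kink[OF s] l)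
  then have "rvec (\<Sum>j<r. l j * fst (uvec r n j), \<Sum>j<r. l j * snd (uvec r n j)) = 0"
    by (simp add: sum_scaleR_rvec sum_diff_prv_eq_0)
  then show ?thesis
    using l unfolding twisting_numbers_def rvec_eq_zero_iff by (auto simp: zero_prod_def)
qed

section \<open>Support functions with prescribed kinks\<close>

definition agree_on_rays :: "(nat \<Rightarrow> real \<times> real) \<Rightarrow> bool" where
  "agree_on_rays m \<longleftrightarrow> (\<forall>j<r. m (prv r j) \<bullet> ray j = m j \<bullet> ray j)"

lemma pieces_agree_on_maxcone_inter:
  assumes agree: "agree_on_rays m"
    and j: "j < r" and k: "k < r" and xj: "x \<in> maxcone r n j" and xk: "x \<in> maxcone r n k"
  shows "m j \<bullet> x = m k \<bullet> x"
proof (cases "j = k")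
  case False
  have on_rays: "m i \<bullet> ray p = m p \<bullet> ray p" if "i < r" "p = i \<or> p = nxt r i" for i p
    using that agree[unfolded agree_on_rays_def, rule_format, OF nxt_less] prv_nxt by auto
  obtain a p where a: "a \<ge> 0" and p: "p = j \<or> p = nxt r j" and x: "x = a *\<^sub>R ray p"
    using maxcone_inter_subset_rays[OF j k False xj xk] .
  obtain c q where c: "c \<ge> 0" and q: "q = k \<or> q = nxt r k" and x': "x = c *\<^sub>R ray q"
    using maxcone_inter_subset_rays[OF k j _ xk xj] False by metis
  show ?thesis
  proof (cases "a = 0")
    case False
    have "p < r" "q < r" using p q j k nxt_less by auto
    moreover have "c \<noteq> 0" using False x x' ray_nonzero \<open>p < r\<close> by auto
    have "inverse a *\<^sub>R (a *\<^sub>R ray p) = inverse a *\<^sub>R (c *\<^sub>R ray q)" using x x' by simp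
    then have "rvec (n p) = (c / a) *\<^sub>R rvec (n q)" using False by (simp add: divide_inverse_commute)
    moreover have "c / a > 0" using a c False \<open>c \<noteq> 0\<close> by simp
    ultimately have "n p = n q"
      using primitive_eqI_positive_multiple primitive_ray by blast
    with \<open>p < r\<close> \<open>q < r\<close> fan have "p = q"
      unfolding smooth_complete_fan_def inj_on_def by simp
    then show ?thesis
      using on_rays[OF j p] on_rays[OF k q] by (simp add: x inner_scaleR_right)
  qed (simp add: x)
qed simp

definition glue :: "(nat \<Rightarrow> real \<times> real) \<Rightarrow> real \<times> real \<Rightarrow> real" where
  "glue m x = m (SOME j. j < r \<and> x \<in> maxcone r n j) \<bullet> x"

lemma glue_on_maxcone:
  assumes "agree_on_rays m" and "j < r" and "x \<in> maxcone r n j"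
  shows "glue m x = m j \<bullet> x"
proof -
  have "\<exists>j. j < r \<and> x \<in> maxcone r n j" using assms(2,3) by blast
  then have "(SOME j. j < r \<and> x \<in> maxcone r n j) < r \<and> x \<in> maxcone r n (SOME j. j < r \<and> x \<in> maxcone r n j)"
    by (rule someI_ex)
  then show ?thesis
    unfolding glue_def using pieces_agree_on_maxcone_inter[OF assms(1)] assms(2,3) by blast
qed

lemma continuous_on_glue:
  assumes agree: "agree_on_rays m"
  shows "continuous_on UNIV (glue m)"
proof -
  have "UNIV = (\<Union>j\<in>{..<r}. maxcone r n j)" using maxcone_cover by auto
  moreover have "continuous_on (\<Union>j\<in>{..<r}. maxcone r n j) (glue m)"
  proof (rule continuous_on_closed_Union)
    fix j assume "j \<in> {..<r}"
    then have j: "j < r" by simp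
    show "closed (maxcone r n j)" by (rule closed_maxcone[OF j])
    have "continuous_on (maxcone r n j) (\<lambda>x. m j \<bullet> x)"
      by (intro continuous_intros)
    then show "continuous_on (maxcone r n j) (glue m)"
      using glue_on_maxcone[OF agree j] by (simp cong: continuous_on_cong)
  qed simp
  ultimately show ?thesis by simp
qed

lemma glue_semi_integral_support_function:
  assumes agree: "agree_on_rays m"
    and half: "\<forall>j<r. half_integral (m j \<bullet> ray j)"
  shows "semi_integral_support_function r n (glue m)"
  unfolding semi_integral_support_function_def rpair_eq_inner
proof (intro conjI allI impI)
  fix j assume j: "j < r"
  show "\<exists>m'. \<forall>x\<in>maxcone r n j. glue m x = m' \<bullet> x"
    using glue_on_maxcone[OF agree j] by blast
  show "\<exists>k::int. glue m (ray j) = of_int k + 1/2"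
    using half j glue_on_maxcone[OF agree j ray_in_maxcone] by (simp add: half_integral_def)
qed (rule continuous_on_glue[OF agree])

lemma theta_lin_glue:
  "agree_on_rays m \<Longrightarrow> j < r \<Longrightarrow> theta_lin r n (glue m) j = m j"
  using theta_lin_eqI glue_on_maxcone by blast

text \<open>\<open>(1/2)(rot n\<^sub>0 - rot n\<^sub>1)\<close> is the functional with value \<open>1/2\<close> on both \<open>n\<^sub>0\<close> and \<open>n\<^sub>1\<close>.\<close>
definition linear_pieces :: "(nat \<Rightarrow> int) \<Rightarrow> nat \<Rightarrow> real \<times> real" where
  "linear_pieces l j = (1/2) *\<^sub>R (rot (ray 0) - rot (ray 1)) +
     (\<Sum>i<j. (of_int (l (Suc i)) / 2) *\<^sub>R rot (ray (Suc i)))"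

lemma linear_pieces_diff:
  assumes tw: "twisting_numbers r n l" and j: "j < r"
  shows "linear_pieces l j - linear_pieces l (prv r j) = (of_int (l j) / 2) *\<^sub>R rot (ray j)"
proof (cases j)
  case 0
  let ?T = "\<lambda>i. (of_int (l i) / 2) *\<^sub>R rot (ray i)"
  have "(\<Sum>i<r. ?T i) = (1/2) *\<^sub>R (\<Sum>i<r. of_int (l i) *\<^sub>R rvec (uvec r n i))"
    by (simp add: scaleR_sum_right rvec_uvec)
  also have "\<dots> = 0"
    unfolding sum_scaleR_rvec using tw by (simp add: twisting_numbers_def rvec_def zero_prod_def)
  finally have "(\<Sum>i<r. ?T i) = 0" .
  moreover have "(\<Sum>i<r. ?T i) = ?T 0 + (\<Sum>i<r - 1. ?T (Suc i))"
    using sum.lessThan_Suc_shift[of ?T "r - 1"] j by simp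
  ultimately have "?T 0 = - (\<Sum>i<r - 1. ?T (Suc i))"
    by (simp add: eq_neg_iff_add_eq_0)
  moreover have "prv r j = r - 1" using j by (simp add: 0 prv_eq)
  ultimately show ?thesis
    by (simp add: 0 linear_pieces_def)
next
  case (Suc i)
  with j show ?thesis by (simp add: prv_eq linear_pieces_def)
qed

lemma linear_pieces_agree:
  assumes "twisting_numbers r n l" and "j < r"
  shows "linear_pieces l (prv r j) \<bullet> ray j = linear_pieces l j \<bullet> ray j"
proof -
  have "(linear_pieces l j - linear_pieces l (prv r j)) \<bullet> ray j = 0"
    by (simp add: linear_pieces_diff[OF assms] inner_rot_left rdet_def)
  then show ?thesis by (simp add: inner_diff_left)
qed

lemma linear_pieces_half_integral:
  assumes tw: "twisting_numbers r n l"
  shows "j < r \<Longrightarrow> half_integral (linear_pieces l j \<bullet> ray j)"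
proof (induction j rule: less_induct)
  case (less j)
  have r: "1 < r" using three_le_r by simp
  have nxt_0: "nxt r 0 = 1" using r by (simp add: nxt_def)
  have base: "(1/2) *\<^sub>R (rot (ray 0) - rot (ray 1)) \<bullet> ray 0 = 1/2"
    "(1/2) *\<^sub>R (rot (ray 0) - rot (ray 1)) \<bullet> ray 1 = 1/2"
    using rdet_ray_nxt[of 0] r by (simp_all add: nxt_0 inner_diff_left inner_rot_left rdet_def algebra_simps)
  consider "j = 0" | "j = 1" | i where "j = Suc (Suc i)" by (metis One_nat_def not0_implies_Suc)
  then show ?case
  proof cases
    case 1
    with base show ?thesis by (simp add: linear_pieces_def half_integral_def exI[of _ 0])
  next
    case 2
    with base show ?thesis
      by (simp add: linear_pieces_def inner_add_left inner_rot_left rdet_def half_integral_def exI[of _ 0])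
  next
    case 3
    let ?m = "linear_pieces l" and ?k = "Suc i"
    have k: "?k < r" and nxt_k: "nxt r ?k = j" and prv_k: "prv r ?k = i" and prv_j: "prv r j = ?k"
      using less.prems 3 by (auto simp: nxt_eq prv_eq)
    have "(?m ?k - ?m i) \<bullet> ray j = of_int (l ?k) / 2"
      using linear_pieces_diff[OF tw k] rdet_ray_nxt[OF k]
      by (simp add: prv_k nxt_k inner_rot_left)
    moreover have "?m ?k \<bullet> ray j = ?m j \<bullet> ray j"
      using linear_pieces_agree[OF tw less.prems] by (simp add: prv_j)
    ultimately have "?m j \<bullet> ray j = of_int (l ?k) / 2 - of_int (selfint r n ?k) * (?m ?k \<bullet> ray ?k) - ?m i \<bullet> ray i"
      using inner_diff_ray_nxt[OF k linear_pieces_agree[OF tw k]] by (simp add: prv_k nxt_k)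
    moreover have "l ?k mod 2 = selfint r n ?k mod 2"
      using tw k by (simp add: twisting_numbers_def)
    ultimately show ?thesis
      using half_integral_recurrence less.IH 3 k by simp
  qed
qed

lemma exists_support_function_with_kinks:
  assumes tw: "twisting_numbers r n l"
  shows "\<exists>\<theta>. semi_integral_support_function r n \<theta> \<and> (\<forall>j<r. kink r n \<theta> j = of_int (l j))"
proof (intro exI conjI allI impI)
  have agree: "agree_on_rays (linear_pieces l)"
    using linear_pieces_agree[OF tw] by (simp add: agree_on_rays_def)
  show "semi_integral_support_function r n (glue (linear_pieces l))"
    using glue_semi_integral_support_function[OF agree] linear_pieces_half_integral[OF tw] by blast
  fix j assume j: "j < r"
  show "kink r n (glue (linear_pieces l)) j = of_int (l j)"
    by (rule kink_eqI[OF j])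
      (simp add: theta_lin_glue[OF agree] j prv_less linear_pieces_diff[OF tw j] rvec_uvec)
qed

lemma support_function_unique_up_to_integral:
  assumes s: "semi_integral_support_function r n \<theta>" and s': "semi_integral_support_function r n \<theta>'"
    and kinks: "\<forall>j<r. kink r n \<theta>' j = kink r n \<theta> j"
  shows "\<exists>m. \<forall>x. \<theta>' x = \<theta> x + rpair (rvec m) x"
proof -
  define d where "d j = theta_lin r n \<theta>' j - theta_lin r n \<theta> j" for j
  have d_prv: "d j = d (prv r j)" if "j < r" for j
    using theta_lin_diff_eq_kink[OF s that] theta_lin_diff_eq_kink[OF s' that] kinks that
    by (simp add: d_def algebra_simps)
  have d_const: "j < r \<Longrightarrow> d j = d 0" for j
  proof (induction j)
    case (Suc j)
    then show ?case using d_prv[OF Suc.prems] by (simp add: prv_eq)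
  qed simp
  have diff: "\<theta>' x = \<theta> x + d 0 \<bullet> x" for x
  proof -
    obtain j where j: "j < r" and x: "x \<in> maxcone r n j" using maxcone_cover by blast
    have "d 0 \<bullet> x = d j \<bullet> x" by (simp add: d_const[OF j])
    also have "\<dots> = \<theta>' x - \<theta> x"
      using support_function_on_maxcone[OF s j x] support_function_on_maxcone[OF s' j x]
      by (simp add: d_def inner_diff_left)
    finally show ?thesis by simp
  qed
  have r: "0 < r" "nxt r 0 = 1" using three_le_r by (simp_all add: nxt_def)
  have "\<exists>a::int. d 0 \<bullet> ray j = of_int a" if "j < r" for j
    using half_integral_diff[OF support_function_half_integral[OF s' that]
        support_function_half_integral[OF s that]] diff[of "ray j"]
    by simp
  then obtain a b where "d 0 \<bullet> ray 0 = of_int a" and "d 0 \<bullet> ray 1 = of_int b"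
    using three_le_r by fastforce
  then have "d 0 = rvec (a * snd (n 1) - b * snd (n 0), b * fst (n 0) - a * fst (n 1))"
    using integral_functional_on_unimodular_basis det2_nxt[OF r(1)] r(2) by simp
  then show ?thesis
    using diff by (metis rpair_eq_inner)
qed

end

theorem proposition4p3:
  fixes r :: nat and n :: "nat \<Rightarrow> int \<times> int"
  assumes fan: "smooth_complete_fan r n"
  shows "(\<forall>\<theta>. semi_integral_support_function r n \<theta> \<longrightarrow>
            (\<exists>l::nat \<Rightarrow> int. (\<forall>j<r. kink r n \<theta> j = real_of_int (l j)) \<and> twisting_numbers r n l))
       \<and> (\<forall>l::nat \<Rightarrow> int. twisting_numbers r n l \<longrightarrow>
            (\<exists>\<theta>. semi_integral_support_function r n \<theta> \<and>
                 (\<forall>j<r. kink r n \<theta> j = real_of_int (l j)) \<and>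
                 (\<forall>\<theta>'. semi_integral_support_function r n \<theta>' \<and>
                        (\<forall>j<r. kink r n \<theta>' j = real_of_int (l j)) \<longrightarrow>
                        (\<exists>m::int \<times> int. \<forall>x. \<theta>' x = \<theta> x + rpair (rvec m) x))))"
proof -
  interpret smooth_fan r n by unfold_locales (rule fan)
  show ?thesis
    using kinks_are_twisting_numbers exists_support_function_with_kinks
      support_function_unique_up_to_integral by (metis (no_types, lifting))
qed

end
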